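(* With $n=2p+1$ agents and complete information, the RC mechanism with abstention subgame perfect implements the majority rule: for every preference profile $R$, every subgame-perfect equilibrium yields the outcome $Maj(R)$, and some subgame-perfect equilibrium yields $Maj(R)$.
   Context: Agents $I=\{1,\dots,n\}$, $n=2p+1$, options $A=\{a,b\}$, strict preferences over $A$, commonly known. Majority rule: $Maj(R)=a$ if at least $p+1$ agents prefer $a$, else $b$. Lotteries are compared by stochastic dominance (an agent preferring $x$ weakly (strictly) prefers $\beta$ to $\eta$ iff $\beta(x)\ge\eta(x)$ ($>$)). RC mechanism with abstention: Voting stage: each agent simultaneously chooses $v_i\in\{a,b,\mathrm{abs}\}$; the profile $v$ is publicly announced. If $a$ and $b$ receive equally many votes (including the case where everyone abstains), the outcome is the lottery giving probability $1/2$ to each option. Otherwise the option with more votes is the Voting-stage winner, and a Confirmation stage follows: $p+1$ agents are drawn uniformly at random from all agents and ordered uniformly, $\pi_1,\dots,\pi_{p+1}$; sequentially, as long as nobody has announced $Y$, agent $\pi_t$ announces $Y$, $N$, or abstains. If some agent announces $Y$, the outcome is the Voting-stage winner; if all announce $N$ or abstain, the outcome is the lottery $\beta(v)$ with $\beta_a(v)=|\{i:v_i=a\}|/(|\{i:v_i=a\}|+|\{i:v_i=b\}|)$, $\beta_b(v)=1-\beta_a(v)$. *)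

theory Defs
  imports Complex_Main
begin

datatype opt = OA | OB
datatype vote = V opt | Abst
datatype ann = Yes | No | AbsC

(* Agents are 0..<n with n = 2p+1.  Lotteries over {a,b} are represented by
   the probability assigned to a. *)

definition na :: "nat \<Rightarrow> (nat \<Rightarrow> vote) \<Rightarrow> nat" where
  "na n v = card {i \<in> {0..<n}. v i = V OA}"

definition nb :: "nat \<Rightarrow> (nat \<Rightarrow> vote) \<Rightarrow> nat" where
  "nb n v = card {i \<in> {0..<n}. v i = V OB}"

definition tie :: "nat \<Rightarrow> (nat \<Rightarrow> vote) \<Rightarrow> bool" where
  "tie n v \<longleftrightarrow> na n v = nb n v"

definition beta_a :: "nat \<Rightarrow> (nat \<Rightarrow> vote) \<Rightarrow> real" where
  "beta_a n v = real (na n v) / real (na n v + nb n v)"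

definition winA :: "nat \<Rightarrow> (nat \<Rightarrow> vote) \<Rightarrow> real" where
  "winA n v = (if na n v > nb n v then 1 else 0)"

(* Confirmation-stage strategy profile: agent i's announcement when drawn,
   given the public voting profile v and the history h of previously drawn
   agents together with their (non-Y) announcements. *)
type_synonym cstrat = "nat \<Rightarrow> (nat \<Rightarrow> vote) \<Rightarrow> (nat \<times> ann) list \<Rightarrow> ann"

(* Probability of outcome a in the Confirmation stage, starting at the chance
   node after history h with k draws still to be made.  The ordered uniform
   draw of p+1 agents is realised by successive uniform draws without
   replacement. *)
fun cv :: "nat \<Rightarrow> nat \<Rightarrow> cstrat \<Rightarrow> (nat \<Rightarrow> vote) \<Rightarrow> (nat \<times> ann) list \<Rightarrow> real" where
  "cv n 0 sc v h = beta_a n v"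
| "cv n (Suc k) sc v h =
     (\<Sum>j \<in> {0..<n} - set (map fst h).
         (if sc j v h = Yes then winA n v else cv n k sc v (h @ [(j, sc j v h)])))
     / real (card ({0..<n} - set (map fst h)))"

(* Probability of a at the decision node where agent j has been drawn after
   history h, with k further draws remaining after j *)
definition dv :: "nat \<Rightarrow> nat \<Rightarrow> cstrat \<Rightarrow> (nat \<Rightarrow> vote) \<Rightarrow> (nat \<times> ann) list \<Rightarrow> nat \<Rightarrow> real" where
  "dv n k sc v h j = (if sc j v h = Yes then winA n v else cv n k sc v (h @ [(j, sc j v h)]))"

(* Confirmation histories that can occur: distinct agents, none announced Y,
   at most p of them (otherwise the stage is over) *)
definition valid_hist :: "nat \<Rightarrow> (nat \<times> ann) list \<Rightarrow> bool" where
  "valid_hist p h \<longleftrightarrow> distinct (map fst h) \<and> set (map fst h) \<subseteq> {0..<2*p+1}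
      \<and> (\<forall>x \<in> set h. snd x \<noteq> Yes) \<and> length h \<le> p"

definition outcome :: "nat \<Rightarrow> (nat \<Rightarrow> vote) \<Rightarrow> cstrat \<Rightarrow> real" where
  "outcome p sv sc = (if tie (2*p+1) sv then 1/2 else cv (2*p+1) (p+1) sc sv [])"

(* With two options, stochastic dominance for an agent preferring x compares
   the probabilities of x; util gives that probability. *)
definition util :: "(nat \<Rightarrow> opt) \<Rightarrow> nat \<Rightarrow> real \<Rightarrow> real" where
  "util R i q = (if R i = OA then q else 1 - q)"

(* Subgames: the whole game, every
   chance node of the Confirmation stage, every decision node of it. *)
definition SPE :: "nat \<Rightarrow> (nat \<Rightarrow> opt) \<Rightarrow> (nat \<Rightarrow> vote) \<Rightarrow> cstrat \<Rightarrow> bool" where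
  "SPE p R sv sc \<longleftrightarrow>
     (\<forall>i < 2*p+1. \<forall>x sc'.
        \<not> util R i (outcome p (sv(i := x)) (sc(i := sc'))) > util R i (outcome p sv sc))
   \<and> (\<forall>v h i sc'. \<not> tie (2*p+1) v \<longrightarrow> valid_hist p h \<longrightarrow> i < 2*p+1 \<longrightarrow>
        \<not> util R i (cv (2*p+1) (p + 1 - length h) (sc(i := sc')) v h)
            > util R i (cv (2*p+1) (p + 1 - length h) sc v h))
   \<and> (\<forall>v h j i sc'. \<not> tie (2*p+1) v \<longrightarrow> valid_hist p h \<longrightarrow> j < 2*p+1 \<longrightarrow>
        j \<notin> set (map fst h) \<longrightarrow> i < 2*p+1 \<longrightarrow>
        \<not> util R i (dv (2*p+1) (p - length h) (sc(i := sc')) v h j)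
            > util R i (dv (2*p+1) (p - length h) sc v h j))"

definition Maj :: "nat \<Rightarrow> (nat \<Rightarrow> opt) \<Rightarrow> opt" where
  "Maj p R = (if card {i \<in> {0..<2*p+1}. R i = OA} \<ge> p + 1 then OA else OB)"

definition deg :: "opt \<Rightarrow> real" where
  "deg x = (if x = OA then 1 else 0)"

end

(*
  Backward induction in the Confirmation stage: a drawn agent who prefers the Voting-stage
  winner w confirms it, and one who does not gains nothing by confirming.  So in every
  equilibrium w is confirmed exactly when some drawn agent prefers w, and otherwise the
  lottery beta(v) is played.  If w is the majority option M, at most p agents oppose it and
  one of the p+1 drawn agents confirms.  If w is the other option, a supporter of M gets
  B * #M / (#M + #other) < 1/2, where B > 0 is the probability that all drawn agents support M;
  voting for M raises this ratio (or creates a tie, worth 1/2, or makes M win), so an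
  equilibrium cannot have M losing.  Sincere voting with sincere confirmation is an
  equilibrium in which M wins.
*)
theory Submission
  imports Defs
begin

fun oth :: "opt \<Rightarrow> opt" where
  "oth OA = OB"
| "oth OB = OA"

lemma oth_neq [simp]: "oth x \<noteq> x" "x \<noteq> oth x"
  by (cases x; simp)+

lemma oth_oth [simp]: "oth (oth x) = x"
  by (cases x) auto

lemma neq_oth_iff: "y \<noteq> oth x \<longleftrightarrow> y = x"
  by (cases x; cases y) auto

definition cnt :: "nat \<Rightarrow> opt \<Rightarrow> (nat \<Rightarrow> vote) \<Rightarrow> nat" where
  "cnt n x v = card {i \<in> {0..<n}. v i = V x}"

definition win :: "nat \<Rightarrow> (nat \<Rightarrow> vote) \<Rightarrow> opt" where
  "win n v = (if nb n v < na n v then OA else OB)"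

lemma winA_deg: "winA n v = deg (win n v)"
  by (simp add: winA_def deg_def win_def)

lemma tie_iff_cnt: "tie n v \<longleftrightarrow> cnt n x v = cnt n (oth x) v"
  by (cases x) (auto simp: tie_def na_def nb_def cnt_def)

lemma wins_iff_cnt: "\<not> tie n v \<and> win n v = x \<longleftrightarrow> cnt n (oth x) v < cnt n x v"
  by (cases x) (auto simp: tie_def win_def na_def nb_def cnt_def)

lemma cnt_upd_same: "i < n \<Longrightarrow> v i \<noteq> V x \<Longrightarrow> cnt n x (v(i := V x)) = Suc (cnt n x v)"
proof -
  assume "i < n" "v i \<noteq> V x"
  then have "{j \<in> {0..<n}. (v(i := V x)) j = V x} = insert i {j \<in> {0..<n}. v j = V x}"
    by auto
  with \<open>v i \<noteq> V x\<close> show ?thesis by (simp add: cnt_def)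
qed

lemma cnt_upd_oth: "cnt n (oth x) (v(i := V x)) \<le> cnt n (oth x) v"
  unfolding cnt_def by (rule card_mono) auto

lemma card_filter_not: "card {i \<in> {0..<n}. \<not> P i} = n - card {i \<in> {0..<n}. P i}"
proof -
  have "{i \<in> {0..<n}. \<not> P i} = {0..<n} - {i \<in> {0..<n}. P i}"
    by auto
  moreover have "card ({0..<n} - {i \<in> {0..<n}. P i}) = n - card {i \<in> {0..<n}. P i}"
    by (subst card_Diff_subset) auto
  ultimately show ?thesis
    by simp
qed

lemma card_Maj_supporters: "p + 1 \<le> card {i \<in> {0..<2*p+1}. R i = Maj p R}"
proof (cases "p + 1 \<le> card {i \<in> {0..<2*p+1}. R i = OA}")
  case False
  have "(y = OB) = (y \<noteq> OA)" for y
    by (cases y) auto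
  then have "card {i \<in> {0..<2*p+1}. R i = OB} = 2*p+1 - card {i \<in> {0..<2*p+1}. R i = OA}"
    using card_filter_not[of "2*p+1" "\<lambda>i. R i = OA"] by simp
  with False show ?thesis by (simp add: Maj_def)
qed (simp add: Maj_def)

lemma card_Maj_opponents: "card {i \<in> {0..<2*p+1}. R i \<noteq> Maj p R} \<le> p"
  using card_filter_not[of "2*p+1" "\<lambda>i. R i = Maj p R"] card_Maj_supporters[of p R] by simp

lemma Maj_wins_if_supporters_vote:
  assumes "\<forall>i<2*p+1. R i = Maj p R \<longrightarrow> v i = V (Maj p R)"
  shows "cnt (2*p+1) (oth (Maj p R)) v < cnt (2*p+1) (Maj p R) v"
proof -
  let ?M = "Maj p R"
  have "card {i \<in> {0..<2*p+1}. R i = ?M} \<le> cnt (2*p+1) ?M v"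
    unfolding cnt_def by (rule card_mono) (use assms in auto)
  moreover have "cnt (2*p+1) (oth ?M) v \<le> card {i \<in> {0..<2*p+1}. R i \<noteq> ?M}"
    unfolding cnt_def by (rule card_mono) (use assms in auto)
  ultimately show ?thesis
    using card_Maj_supporters[of p R] card_Maj_opponents[of p R] by linarith
qed

lemma util_deg_pref: "util R i (deg (R i)) = 1"
  by (cases "R i") (auto simp: util_def deg_def)

lemma util_deg_other: "R i \<noteq> w \<Longrightarrow> util R i (deg w) = 0"
  by (cases "R i"; cases w) (auto simp: util_def deg_def)

lemma util_bounds: "0 \<le> q \<Longrightarrow> q \<le> 1 \<Longrightarrow> 0 \<le> util R i q \<and> util R i q \<le> 1"
  by (auto simp: util_def)

lemma util_eq_1_imp: "util R i q = 1 \<Longrightarrow> q = deg (R i)"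
  by (cases "R i") (auto simp: util_def deg_def)

lemma util_eq_0_imp: "R i \<noteq> w \<Longrightarrow> util R i q = 0 \<Longrightarrow> q = deg w"
  by (cases "R i"; cases w) (auto simp: util_def deg_def)

lemma util_affine: "util R i (x + (y - x) * t) = util R i x + (util R i y - util R i x) * t"
  by (simp add: util_def algebra_simps)

lemma util_half [simp]: "util R i (1/2) = 1/2"
  by (simp add: util_def)

lemma util_beta_a:
  assumes "\<not> tie n v"
  shows "util R i (beta_a n v) = real (cnt n (R i) v) / real (cnt n (R i) v + cnt n (oth (R i)) v)"
proof (cases "R i")
  case OB
  from assms have "real (na n v) + real (nb n v) \<noteq> 0"
    by (auto simp: tie_def)
  then have "1 - real (na n v) / real (na n v + nb n v) = real (nb n v) / real (nb n v + na n v)"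
    by (simp add: field_simps)
  with OB show ?thesis by (simp add: util_def beta_a_def na_def nb_def cnt_def)
qed (simp add: util_def beta_a_def na_def nb_def cnt_def)

lemma average_bounds:
  assumes "\<And>j. j \<in> S \<Longrightarrow> 0 \<le> t j \<and> t j \<le> 1"
  shows "0 \<le> (\<Sum>j\<in>S. t j) / real (card S) \<and> (\<Sum>j\<in>S. t j) / real (card S) \<le> 1"
proof -
  have "(\<Sum>j\<in>S. t j) \<le> real (card S)"
    using sum_mono[of S t "\<lambda>_. 1"] assms by simp
  moreover have "0 \<le> (\<Sum>j\<in>S. t j)"
    using sum_nonneg[of S t] assms by simp
  ultimately show ?thesis
    by (cases "card S = 0") (auto simp: divide_le_eq_1)
qed

lemma beta_a_bounds: "0 \<le> beta_a n v \<and> beta_a n v \<le> 1"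
  by (cases "na n v + nb n v = 0") (auto simp: beta_a_def divide_le_eq_1)

lemma cv_bounds: "0 \<le> cv n k sc v h \<and> cv n k sc v h \<le> 1"
proof (induction k arbitrary: h)
  case 0
  show ?case by (simp add: beta_a_bounds)
next
  case (Suc k)
  show ?case
    unfolding cv.simps by (rule average_bounds) (use Suc in \<open>auto simp: winA_def\<close>)
qed

lemma dv_bounds: "0 \<le> dv n k sc v h j \<and> dv n k sc v h j \<le> 1"
  using cv_bounds by (simp add: dv_def winA_def)

abbreviation undrawn :: "nat \<Rightarrow> (nat \<times> ann) list \<Rightarrow> nat set" where
  "undrawn n h \<equiv> {0..<n} - set (map fst h)"

lemma cv_Suc_dv: "cv n (Suc k) sc v h = (\<Sum>j \<in> undrawn n h. dv n k sc v h j) / real (card (undrawn n h))"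
  by (simp add: dv_def)

lemma cv_upd_drawn: "i \<in> set (map fst h) \<Longrightarrow> cv n k (sc(i := f)) v h = cv n k sc v h"
proof (induction k arbitrary: h)
  case (Suc k)
  have "(\<Sum>j \<in> undrawn n h. dv n k (sc(i := f)) v h j) = (\<Sum>j \<in> undrawn n h. dv n k sc v h j)"
  proof (rule sum.cong)
    fix j assume "j \<in> undrawn n h"
    with Suc.prems have "j \<noteq> i" by auto
    with Suc.prems show "dv n k (sc(i := f)) v h j = dv n k sc v h j"
      by (simp add: dv_def Suc.IH)
  qed simp
  then show ?case
    unfolding cv_Suc_dv by simp
qed simp

fun avoid_prob :: "(nat \<Rightarrow> opt) \<Rightarrow> opt \<Rightarrow> nat \<Rightarrow> nat set \<Rightarrow> real" where
  "avoid_prob R w 0 S = 1"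
| "avoid_prob R w (Suc k) S = (\<Sum>j\<in>S. if R j = w then 0 else avoid_prob R w k (S - {j})) / real (card S)"

lemma avoid_prob_bounds: "0 \<le> avoid_prob R w k S \<and> avoid_prob R w k S \<le> 1"
proof (induction k arbitrary: S)
  case (Suc k)
  show ?case
    unfolding avoid_prob.simps by (rule average_bounds) (use Suc in auto)
qed simp

lemma card_opponents_Diff:
  "finite S \<Longrightarrow> j \<in> S \<Longrightarrow> R j \<noteq> w \<Longrightarrow>
   card {i \<in> S - {j}. R i \<noteq> w} = card {i \<in> S. R i \<noteq> w} - 1"
proof -
  assume "j \<in> S" "R j \<noteq> w"
  then have "{i \<in> S - {j}. R i \<noteq> w} = {i \<in> S. R i \<noteq> w} - {j}" "j \<in> {i \<in> S. R i \<noteq> w}"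
    by auto
  then show ?thesis by simp
qed

lemma avoid_prob_eq_0:
  "finite S \<Longrightarrow> card {j \<in> S. R j \<noteq> w} < k \<Longrightarrow> avoid_prob R w k S = 0"
proof (induction k arbitrary: S)
  case (Suc k)
  have "avoid_prob R w k (S - {j}) = 0" if "j \<in> S" "R j \<noteq> w" for j
  proof (rule Suc.IH)
    have "0 < card {j \<in> S. R j \<noteq> w}"
      using that Suc.prems(1) by (auto simp: card_gt_0_iff)
    then show "card {i \<in> S - {j}. R i \<noteq> w} < k"
      using card_opponents_Diff[of S j R w, OF Suc.prems(1) that] Suc.prems(2) by linarith
  qed (use Suc.prems in simp)
  then have "(\<Sum>j\<in>S. if R j = w then 0 else avoid_prob R w k (S - {j})) = 0"
    by (intro sum.neutral) auto
  then show ?case by simp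
qed simp

lemma avoid_prob_pos:
  "finite S \<Longrightarrow> k \<le> card {j \<in> S. R j \<noteq> w} \<Longrightarrow> 0 < avoid_prob R w k S"
proof (induction k arbitrary: S)
  case (Suc k)
  then have "0 < card {j \<in> S. R j \<noteq> w}"
    by simp
  then obtain j0 where j0: "j0 \<in> S" "R j0 \<noteq> w"
    by (auto simp: card_gt_0_iff)
  have "0 < avoid_prob R w k (S - {j0})"
    using Suc card_opponents_Diff[of S j0 R w, OF Suc.prems(1) j0] by simp
  then have "0 < (\<Sum>j\<in>S. if R j = w then 0 else avoid_prob R w k (S - {j}))"
    using j0 Suc.prems(1) avoid_prob_bounds
    by (intro sum_pos2[of S j0]) auto
  moreover have "0 < card S"
    using j0 Suc.prems(1) card_gt_0_iff by blast
  ultimately show ?case by simp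
qed simp

declare cv.simps(2) [simp del] avoid_prob.simps(2) [simp del]

definition spe_at_decisions :: "nat \<Rightarrow> (nat \<Rightarrow> opt) \<Rightarrow> cstrat \<Rightarrow> bool" where
  "spe_at_decisions p R sc \<longleftrightarrow>
     (\<forall>v h j i sc'. \<not> tie (2*p+1) v \<longrightarrow> valid_hist p h \<longrightarrow> j < 2*p+1 \<longrightarrow>
        j \<notin> set (map fst h) \<longrightarrow> i < 2*p+1 \<longrightarrow>
        \<not> util R i (dv (2*p+1) (p - length h) (sc(i := sc')) v h j)
            > util R i (dv (2*p+1) (p - length h) sc v h j))"

lemma SPE_imp_spe_at_decisions: "SPE p R sv sc \<Longrightarrow> spe_at_decisions p R sc"
  by (simp add: SPE_def spe_at_decisions_def)

lemma dv_at_spe: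
  assumes spe: "spe_at_decisions p R sc" and nt: "\<not> tie (2*p+1) v" and h: "valid_hist p h"
    and j: "j < 2*p+1" "j \<notin> set (map fst h)"
    and cont: "\<And>a. a \<noteq> Yes \<Longrightarrow> cv (2*p+1) (p - length h) sc v (h @ [(j, a)]) = c"
  shows "dv (2*p+1) (p - length h) sc v h j = (if R j = win (2*p+1) v then winA (2*p+1) v else c)"
proof -
  let ?n = "2*p+1" and ?k = "p - length h" and ?w = "win (2*p+1) v"
  let ?d = "dv ?n ?k sc v h j"
  have no_gain: "util R j (dv ?n ?k (sc(j := f)) v h j) \<le> util R j ?d" for f
    using spe nt h j unfolding spe_at_decisions_def by (meson not_less)
  have "dv ?n ?k (sc(j := \<lambda>_ _. Yes)) v h j = winA ?n v"
    by (simp add: dv_def)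
  with no_gain have yes: "util R j (winA ?n v) \<le> util R j ?d"
    by metis
  have "dv ?n ?k (sc(j := \<lambda>_ _. No)) v h j = c"
    using cont[of No] cv_upd_drawn[of j "h @ [(j, No)]"] by (simp add: dv_def)
  with no_gain have no: "util R j c \<le> util R j ?d"
    by metis
  have c_bounds: "0 \<le> c \<and> c \<le> 1"
    using cont[of No] cv_bounds by (metis ann.distinct(1))
  show ?thesis
  proof (cases "R j = ?w")
    case True
    then have "util R j (winA ?n v) = 1"
      by (metis winA_deg util_deg_pref)
    with yes have "util R j ?d = 1"
      using util_bounds[of ?d R j] dv_bounds by fastforce
    then show ?thesis
      using True util_eq_1_imp winA_deg by metis
  next
    case opposes: False
    show ?thesis
    proof (cases "sc j v h = Yes")
      case True
      then have "?d = winA ?n v"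
        by (simp add: dv_def)
      with no opposes have "util R j c \<le> 0"
        by (simp add: winA_deg util_deg_other)
      then have "c = deg ?w"
        using util_bounds[of c R j] c_bounds util_eq_0_imp[of R j, OF opposes] by fastforce
      with opposes \<open>?d = winA ?n v\<close> show ?thesis
        by (simp add: winA_deg)
    next
      case False
      with opposes cont show ?thesis
        by (simp add: dv_def)
    qed
  qed
qed

lemma mult_add_divide_cancel_left: "0 < c \<Longrightarrow> (real c * x + y) / real c = x + y / real c"
  by (simp add: field_simps)

lemma cv_at_spe:
  assumes spe: "spe_at_decisions p R sc" and nt: "\<not> tie (2*p+1) v"
    and "distinct (map fst h)" "set (map fst h) \<subseteq> {0..<2*p+1}" "\<forall>x\<in>set h. snd x \<noteq> Yes"
    and "length h + k = p + 1"
  shows "cv (2*p+1) k sc v h = winA (2*p+1) v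
           + (beta_a (2*p+1) v - winA (2*p+1) v) * avoid_prob R (win (2*p+1) v) k (undrawn (2*p+1) h)"
  using assms(3-)
proof (induction k arbitrary: h)
  case (Suc k)
  let ?n = "2*p+1" and ?w = "win (2*p+1) v" and ?W = "winA (2*p+1) v"
  let ?D = "beta_a ?n v - ?W" and ?P = "undrawn ?n h"
  have h: "valid_hist p h" and k: "p - length h = k"
    using Suc.prems by (auto simp: valid_hist_def)
  have dv_eq: "dv ?n k sc v h j
      = (if R j = ?w then ?W else ?W + ?D * avoid_prob R ?w k (?P - {j}))" if "j \<in> ?P" for j
  proof -
    have "cv ?n k sc v (h @ [(j, a)]) = ?W + ?D * avoid_prob R ?w k (?P - {j})" if "a \<noteq> Yes" for a
    proof -
      have "undrawn ?n (h @ [(j, a)]) = ?P - {j}"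
        by auto
      then show ?thesis
        using Suc.IH[of "h @ [(j, a)]"] Suc.prems \<open>j \<in> ?P\<close> that by simp
    qed
    then show ?thesis
      using dv_at_spe[OF spe nt h] \<open>j \<in> ?P\<close> k by auto
  qed
  have "card ?P = ?n - length h"
    using Suc.prems distinct_card[of "map fst h"] by (simp add: card_Diff_subset)
  then have "0 < card ?P"
    using Suc.prems by simp
  let ?A = "\<Sum>j\<in>?P. if R j = ?w then 0 else avoid_prob R ?w k (?P - {j})"
  have "cv ?n (Suc k) sc v h = (\<Sum>j\<in>?P. dv ?n k sc v h j) / card ?P"
    by (rule cv_Suc_dv)
  also have "(\<Sum>j\<in>?P. dv ?n k sc v h j)
      = (\<Sum>j\<in>?P. ?W + ?D * (if R j = ?w then 0 else avoid_prob R ?w k (?P - {j})))"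
    by (rule sum.cong) (use dv_eq in auto)
  also have "\<dots> = card ?P * ?W + ?D * ?A"
    by (simp add: sum.distrib sum_distrib_left)
  also have "(card ?P * ?W + ?D * ?A) / card ?P = ?W + ?D * ?A / card ?P"
    using \<open>0 < card ?P\<close> by (rule mult_add_divide_cancel_left)
  finally show ?case
    by (simp only: avoid_prob.simps times_divide_eq_right)
qed simp

lemma outcome_spe_if_Maj_wins:
  assumes spe: "spe_at_decisions p R sc"
    and wins: "cnt (2*p+1) (oth (Maj p R)) v < cnt (2*p+1) (Maj p R) v"
  shows "outcome p v sc = deg (Maj p R)"
proof -
  let ?n = "2*p+1"
  have nt: "\<not> tie ?n v" and w: "win ?n v = Maj p R"
    using wins wins_iff_cnt by blast+
  have "avoid_prob R (Maj p R) (p + 1) {0..<?n} = 0"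
    using card_Maj_opponents[of p R] by (intro avoid_prob_eq_0) auto
  then show ?thesis
    using cv_at_spe[OF spe nt, of "[]" "p + 1"] nt w by (simp add: outcome_def winA_deg)
qed

lemma avoid_prob_Maj_supporters_pos: "0 < avoid_prob R (oth (Maj p R)) (p + 1) {0..<2*p+1}"
  using card_Maj_supporters[of p R] by (intro avoid_prob_pos) (auto simp: neq_oth_iff)

lemma util_outcome_spe_if_Maj_loses:
  assumes spe: "spe_at_decisions p R sc" and nt: "\<not> tie (2*p+1) v"
    and w: "win (2*p+1) v = oth (Maj p R)" and i: "R i = Maj p R"
  shows "util R i (outcome p v sc)
           = avoid_prob R (oth (Maj p R)) (p + 1) {0..<2*p+1} * util R i (beta_a (2*p+1) v)"
proof -
  have "util R i (winA (2*p+1) v) = 0"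
    using w i by (simp add: winA_deg util_deg_other)
  then show ?thesis
    using cv_at_spe[OF spe nt, of "[]" "p + 1"] nt w by (simp add: outcome_def util_affine)
qed

definition supporter_value :: "real \<Rightarrow> nat \<Rightarrow> nat \<Rightarrow> real" where
  "supporter_value B c d = (if d < c then 1 else if c = d then 1/2 else B * (c / (c + d)))"

lemma util_outcome_spe_Maj_supporter:
  assumes spe: "spe_at_decisions p R sc" and i: "R i = Maj p R"
  shows "util R i (outcome p v sc)
           = supporter_value (avoid_prob R (oth (Maj p R)) (p + 1) {0..<2*p+1})
               (cnt (2*p+1) (Maj p R) v) (cnt (2*p+1) (oth (Maj p R)) v)"
proof -
  let ?n = "2*p+1" and ?M = "Maj p R"
  consider (win) "cnt ?n (oth ?M) v < cnt ?n ?M v" | (tie) "tie ?n v"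
    | (lose) "\<not> tie ?n v" "win ?n v = oth ?M"
    using wins_iff_cnt[of ?n v ?M] neq_oth_iff by blast
  then show ?thesis
  proof cases
    case win
    then show ?thesis
      using outcome_spe_if_Maj_wins[OF spe win] i util_deg_pref[of R i]
      by (simp add: supporter_value_def)
  next
    case tie
    then show ?thesis
      by (simp add: supporter_value_def outcome_def tie_iff_cnt[of _ _ ?M])
  next
    case lose
    then have "cnt ?n ?M v < cnt ?n (oth ?M) v"
      using wins_iff_cnt[of ?n v "oth ?M"] by simp
    with lose show ?thesis
      using util_outcome_spe_if_Maj_loses[OF spe lose i] util_beta_a[OF lose(1), of R i] i
      by (simp add: supporter_value_def)
  qed
qed

lemma supporter_value_strict_mono:
  assumes B: "0 < B" "B \<le> 1" and "c \<le> d" "d' \<le> d"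
  shows "supporter_value B c d < supporter_value B (Suc c) d'"
proof (cases "c = d")
  case False
  with \<open>c \<le> d\<close> have "c < d" by simp
  have "B * (c / (c + d)) \<le> c / (c + d)"
    by (rule mult_left_le_one_le) (use B in auto)
  also have "c / (c + d) < 1/2"
    using \<open>c < d\<close> by (simp add: field_simps)
  finally have lhs: "supporter_value B c d < 1/2"
    using \<open>c < d\<close> by (simp add: supporter_value_def)
  have "real c * d' \<le> real c * d"
    using \<open>d' \<le> d\<close> by (simp add: mult_left_mono)
  then have "real c * (Suc c + d') < real (Suc c) * (c + d)"
    using \<open>c < d\<close> by (simp add: algebra_simps)
  then have "c / (c + d) < Suc c / (Suc c + d')"
    using \<open>c < d\<close> by (simp add: field_simps)
  then have "B * (c / (c + d)) < B * (Suc c / (Suc c + d'))"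
    using B(1) by (rule mult_strict_left_mono)
  then have "supporter_value B c d < B * (Suc c / (Suc c + d'))"
    using \<open>c < d\<close> by (simp add: supporter_value_def)
  with lhs show ?thesis
    unfolding supporter_value_def[of B "Suc c"] by (auto simp: add.assoc)
qed (use assms in \<open>simp add: supporter_value_def\<close>)

lemma SPE_voting_no_gain:
  assumes "SPE p R sv sc" "i < 2*p+1"
  shows "util R i (outcome p (sv(i := x)) sc) \<le> util R i (outcome p sv sc)"
  using assms unfolding SPE_def by (metis fun_upd_triv not_less)

lemma SPE_outcome_Maj:
  assumes spe: "SPE p R sv sc"
  shows "outcome p sv sc = deg (Maj p R)"
proof (rule ccontr)
  let ?n = "2*p+1" and ?M = "Maj p R"
  let ?B = "avoid_prob R (oth ?M) (p + 1) {0..<?n}"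
  assume "outcome p sv sc \<noteq> deg ?M"
  moreover have sd: "spe_at_decisions p R sc"
    using spe by (rule SPE_imp_spe_at_decisions)
  ultimately have not_win: "cnt ?n ?M sv \<le> cnt ?n (oth ?M) sv"
    using outcome_spe_if_Maj_wins[OF sd] not_less by blast
  then obtain i where i: "i < ?n" "R i = ?M" "sv i \<noteq> V ?M"
    using Maj_wins_if_supporters_vote[of p R sv] by auto
  let ?v = "sv(i := V ?M)"
  have "util R i (outcome p sv sc) = supporter_value ?B (cnt ?n ?M sv) (cnt ?n (oth ?M) sv)"
    using sd i(2) by (rule util_outcome_spe_Maj_supporter)
  also have "\<dots> < supporter_value ?B (Suc (cnt ?n ?M sv)) (cnt ?n (oth ?M) ?v)"
    using avoid_prob_Maj_supporters_pos avoid_prob_bounds not_win cnt_upd_oth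
    by (intro supporter_value_strict_mono) auto
  also have "\<dots> = util R i (outcome p ?v sc)"
    using util_outcome_spe_Maj_supporter[OF sd i(2)] cnt_upd_same[of i ?n sv, OF i(1) i(3)] by simp
  finally show False
    using SPE_voting_no_gain[OF spe i(1), of "V ?M"] by simp
qed

definition sincere_confirm :: "(nat \<Rightarrow> opt) \<Rightarrow> nat \<Rightarrow> cstrat" where
  "sincere_confirm R n j v h = (if R j = win n v then Yes else No)"

lemma cv_sincere_confirm_drawn:
  "map fst h = map fst h' \<Longrightarrow> cv n k (sincere_confirm R n) v h = cv n k (sincere_confirm R n) v h'"
proof (induction k arbitrary: h h')
  case (Suc k)
  have "dv n k (sincere_confirm R n) v h j = dv n k (sincere_confirm R n) v h' j" for j
  proof -
    have "cv n k (sincere_confirm R n) v (h @ [(j, a)]) = cv n k (sincere_confirm R n) v (h' @ [(j, a)])"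
      for a using Suc by simp
    moreover have "sincere_confirm R n j v h = sincere_confirm R n j v h'"
      by (simp add: sincere_confirm_def)
    ultimately show ?thesis
      by (simp add: dv_def)
  qed
  with Suc.prems show ?case
    by (simp add: cv_Suc_dv)
qed simp

(* Unlike util, this linear form of the comparison commutes with averaging over draws. *)
definition pref_sign :: "(nat \<Rightarrow> opt) \<Rightarrow> nat \<Rightarrow> real" where
  "pref_sign R i = (if R i = OA then 1 else -1)"

lemma util_le_iff_pref_sign: "util R i x \<le> util R i y \<longleftrightarrow> pref_sign R i * x \<le> pref_sign R i * y"
  by (auto simp: util_def pref_sign_def)

lemma pref_sign_le_deg_pref: "0 \<le> x \<Longrightarrow> x \<le> 1 \<Longrightarrow> pref_sign R i * x \<le> pref_sign R i * deg (R i)"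
  by (cases "R i") (auto simp: pref_sign_def deg_def)

lemma pref_sign_deg_other_le:
  "R i \<noteq> w \<Longrightarrow> 0 \<le> x \<Longrightarrow> x \<le> 1 \<Longrightarrow> pref_sign R i * deg w \<le> pref_sign R i * x"
  by (cases "R i"; cases w) (auto simp: pref_sign_def deg_def)

lemma sincere_confirm_decision_no_gain:
  assumes cont: "\<And>h. pref_sign R i * cv n k ((sincere_confirm R n)(i := f)) v h
                      \<le> pref_sign R i * cv n k (sincere_confirm R n) v h"
  shows "pref_sign R i * dv n k ((sincere_confirm R n)(i := f)) v h j
           \<le> pref_sign R i * dv n k (sincere_confirm R n) v h j"
proof (cases "j = i")
  case False
  then show ?thesis
    using cont[of "h @ [(j, sincere_confirm R n j v h)]"] by (simp add: dv_def)
next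
  case True
  show ?thesis
  proof (cases "R i = win n v")
    case wins: True
    then have "dv n k (sincere_confirm R n) v h j = deg (R i)"
      using \<open>j = i\<close> by (simp add: dv_def sincere_confirm_def winA_deg)
    then show ?thesis
      using pref_sign_le_deg_pref dv_bounds by metis
  next
    case loses: False
    then have sincere: "dv n k (sincere_confirm R n) v h j = cv n k (sincere_confirm R n) v (h @ [(i, No)])"
      using \<open>j = i\<close> by (simp add: dv_def sincere_confirm_def)
    show ?thesis
    proof (cases "f v h = Yes")
      case True
      then have "dv n k ((sincere_confirm R n)(i := f)) v h j = deg (win n v)"
        using \<open>j = i\<close> by (simp add: dv_def winA_deg)
      then show ?thesis
        using sincere pref_sign_deg_other_le[of R i, OF loses] cv_bounds by metis
    next
      case False
      then have "dv n k ((sincere_confirm R n)(i := f)) v h j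
          = cv n k ((sincere_confirm R n)(i := f)) v (h @ [(i, f v h)])"
        using \<open>j = i\<close> by (simp add: dv_def)
      moreover have "cv n k (sincere_confirm R n) v (h @ [(i, f v h)])
          = cv n k (sincere_confirm R n) v (h @ [(i, No)])"
        by (rule cv_sincere_confirm_drawn) simp
      ultimately show ?thesis
        using sincere cont[of "h @ [(i, f v h)]"] by simp
    qed
  qed
qed

lemma cv_sincere_confirm_no_gain:
  "pref_sign R i * cv n k ((sincere_confirm R n)(i := f)) v h
     \<le> pref_sign R i * cv n k (sincere_confirm R n) v h"
proof (induction k arbitrary: h)
  case (Suc k)
  have "(\<Sum>j \<in> undrawn n h. pref_sign R i * dv n k ((sincere_confirm R n)(i := f)) v h j)
      \<le> (\<Sum>j \<in> undrawn n h. pref_sign R i * dv n k (sincere_confirm R n) v h j)"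
    by (rule sum_mono) (rule sincere_confirm_decision_no_gain[OF Suc.IH])
  then show ?case
    unfolding cv_Suc_dv by (simp add: sum_distrib_left[symmetric] divide_right_mono)
qed simp

lemma dv_sincere_confirm_no_gain:
  "util R i (dv n k ((sincere_confirm R n)(i := f)) v h j) \<le> util R i (dv n k (sincere_confirm R n) v h j)"
  unfolding util_le_iff_pref_sign by (rule sincere_confirm_decision_no_gain[OF cv_sincere_confirm_no_gain])

lemma spe_at_decisions_sincere_confirm: "spe_at_decisions p R (sincere_confirm R (2*p+1))"
  unfolding spe_at_decisions_def using dv_sincere_confirm_no_gain by (simp add: not_less)

lemma outcome_sincere: "outcome p (\<lambda>j. V (R j)) (sincere_confirm R (2*p+1)) = deg (Maj p R)"
  by (rule outcome_spe_if_Maj_wins[OF spe_at_decisions_sincere_confirm])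
    (rule Maj_wins_if_supporters_vote, simp)

lemma SPE_sincere: "SPE p R (\<lambda>j. V (R j)) (sincere_confirm R (2*p+1))"
proof -
  let ?n = "2*p+1" and ?M = "Maj p R"
  let ?sv = "\<lambda>j. V (R j)" and ?sc = "sincere_confirm R (2*p+1)"
  have "util R i (outcome p (?sv(i := x)) (?sc(i := f))) \<le> util R i (outcome p ?sv ?sc)" for i x f
  proof (cases "R i = ?M")
    case True
    then show ?thesis
      using outcome_sincere util_deg_pref[of R i] util_bounds cv_bounds
      by (simp add: outcome_def)
  next
    case False
    let ?v = "?sv(i := x)"
    have wins: "cnt ?n (oth ?M) ?v < cnt ?n ?M ?v"
      using False by (intro Maj_wins_if_supporters_vote) auto
    then have "\<not> tie ?n ?v"
      using wins_iff_cnt by blast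
    then have "util R i (outcome p ?v (?sc(i := f))) \<le> util R i (outcome p ?v ?sc)"
      using cv_sincere_confirm_no_gain by (simp add: outcome_def util_le_iff_pref_sign)
    also have "outcome p ?v ?sc = outcome p ?sv ?sc"
      using outcome_spe_if_Maj_wins[OF spe_at_decisions_sincere_confirm wins] outcome_sincere
      by simp
    finally show ?thesis .
  qed
  moreover have "util R i (cv ?n k (?sc(i := f)) v h) \<le> util R i (cv ?n k ?sc v h)" for i k f v h
    unfolding util_le_iff_pref_sign by (rule cv_sincere_confirm_no_gain)
  ultimately show ?thesis
    using spe_at_decisions_sincere_confirm unfolding SPE_def spe_at_decisions_def
    by (simp add: not_less)
qed

theorem proposition4:
  fixes p :: nat and R :: "nat \<Rightarrow> opt"
  shows "(\<forall>sv sc. SPE p R sv sc \<longrightarrow> outcome p sv sc = deg (Maj p R))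
       \<and> (\<exists>sv sc. SPE p R sv sc \<and> outcome p sv sc = deg (Maj p R))"
  using SPE_outcome_Maj SPE_sincere outcome_sincere by blast

end
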